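(* Let $S$ be an AG-groupoid with left identity $e$, and let $P$ be a left ideal of $S$. Then $P$ is quasi-prime if and only if for all $a,b\in S$, $(Sa)b\subseteq P$ implies $a\in P$ or $b\in P$.
   Context: An AG-groupoid is a set $S$ with a binary operation satisfying $(ab)c=(cb)a$ for all $a,b,c\in S$. A left identity is an element $e$ with $ea=a$ for all $a\in S$. For nonempty subsets, $AB=\{ab:a\in A,b\in B\}$; for $a\in S$, $Sa=\{sa:s\in S\}$ and $(Sa)b=\{(sa)b: s\in S\}$. A left ideal is a nonempty subset $I$ with $SI\subseteq I$. A left ideal $P$ is quasi-prime if for all left ideals $A,B$ of $S$, $AB\subseteq P$ implies $A\subseteq P$ or $B\subseteq P$. *)

theory Defs
  imports Main
begin

definition AG_groupoid :: "'a set \<Rightarrow> ('a \<Rightarrow> 'a \<Rightarrow> 'a) \<Rightarrow> bool" where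
  "AG_groupoid S m \<longleftrightarrow> (\<forall>a\<in>S. \<forall>b\<in>S. m a b \<in> S) \<and>
     (\<forall>a\<in>S. \<forall>b\<in>S. \<forall>c\<in>S. m (m a b) c = m (m c b) a)"

definition left_identity :: "'a set \<Rightarrow> ('a \<Rightarrow> 'a \<Rightarrow> 'a) \<Rightarrow> 'a \<Rightarrow> bool" where
  "left_identity S m e \<longleftrightarrow> e \<in> S \<and> (\<forall>a\<in>S. m e a = a)"

definition setmult :: "('a \<Rightarrow> 'a \<Rightarrow> 'a) \<Rightarrow> 'a set \<Rightarrow> 'a set \<Rightarrow> 'a set" where
  "setmult m A B = {m a b | a b. a \<in> A \<and> b \<in> B}"

definition left_ideal :: "'a set \<Rightarrow> ('a \<Rightarrow> 'a \<Rightarrow> 'a) \<Rightarrow> 'a set \<Rightarrow> bool" where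
  "left_ideal S m I \<longleftrightarrow> I \<noteq> {} \<and> I \<subseteq> S \<and> setmult m S I \<subseteq> I"

definition quasi_prime :: "'a set \<Rightarrow> ('a \<Rightarrow> 'a \<Rightarrow> 'a) \<Rightarrow> 'a set \<Rightarrow> bool" where
  "quasi_prime S m P \<longleftrightarrow> left_ideal S m P \<and>
     (\<forall>A B. left_ideal S m A \<longrightarrow> left_ideal S m B \<longrightarrow>
        setmult m A B \<subseteq> P \<longrightarrow> A \<subseteq> P \<or> B \<subseteq> P)"

end

theory Submission
  imports Defs
begin

(* Forward direction: if (Sa)b \<subseteq> P then (Sa)(Sb) \<subseteq> P, so quasi-primeness
   gives Sa \<subseteq> P or Sb \<subseteq> P, hence a \<in> P or b \<in> P.
   Backward direction (valid for arbitrary left ideals): if AB \<subseteq> P and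
   b \<in> B - P, then for every a \<in> A the set (Sa)b lies in AB \<subseteq> P, so a \<in> P. *)

lemma AG_closed:
  assumes "AG_groupoid S m" "a \<in> S" "b \<in> S"
  shows "m a b \<in> S"
  using assms unfolding AG_groupoid_def by blast

lemma AG_left_invertive:
  assumes "AG_groupoid S m" "a \<in> S" "b \<in> S" "c \<in> S"
  shows "m (m a b) c = m (m c b) a"
  using assms unfolding AG_groupoid_def by blast

lemma left_identityD:
  assumes "left_identity S m e"
  shows "e \<in> S" and "a \<in> S \<Longrightarrow> m e a = a"
  using assms unfolding left_identity_def by auto

lemma left_ideal_absorb:
  assumes "left_ideal S m I" "s \<in> S" "x \<in> I"
  shows "m s x \<in> I"
  using assms unfolding left_ideal_def setmult_def by blast

lemma left_ideal_subset:
  assumes "left_ideal S m I"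
  shows "I \<subseteq> S"
  using assms unfolding left_ideal_def by blast

lemma AG_medial:
  assumes ag: "AG_groupoid S m" and "a \<in> S" "b \<in> S" "c \<in> S" "d \<in> S"
  shows "m (m a b) (m c d) = m (m a c) (m b d)"
proof -
  have "m (m a b) (m c d) = m (m (m c d) b) a"
    using AG_left_invertive[OF ag _ _ AG_closed[OF ag, of c d]] assms by simp
  also have "m (m c d) b = m (m b d) c"
    using assms by (simp add: AG_left_invertive)
  also have "m (m (m b d) c) a = m (m a c) (m b d)"
    using AG_left_invertive[OF ag AG_closed[OF ag, of b d] _ _] assms by simp
  finally show ?thesis .
qed

lemma AG_left_swap:
  assumes ag: "AG_groupoid S m" and e: "left_identity S m e"
    and "a \<in> S" "b \<in> S" "c \<in> S"
  shows "m a (m b c) = m b (m a c)"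
proof -
  have eS: "e \<in> S" using left_identityD(1)[OF e] .
  have "m a (m b c) = m (m e a) (m b c)" using assms by (simp add: left_identityD)
  also have "\<dots> = m (m e b) (m a c)" using AG_medial[OF ag eS] assms by simp
  also have "\<dots> = m b (m a c)" using assms by (simp add: left_identityD)
  finally show ?thesis .
qed

lemma AG_paramedial:
  assumes ag: "AG_groupoid S m" and e: "left_identity S m e"
    and "a \<in> S" "b \<in> S" "c \<in> S" "d \<in> S"
  shows "m (m a b) (m c d) = m (m d b) (m c a)"
proof -
  have "m (m a b) (m c d) = m c (m (m a b) d)"
    using AG_left_swap[OF ag e] assms by (simp add: AG_closed)
  also have "m (m a b) d = m (m d b) a"
    using assms by (simp add: AG_left_invertive)
  also have "m c (m (m d b) a) = m (m d b) (m c a)"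
    using AG_left_swap[OF ag e] assms by (simp add: AG_closed)
  finally show ?thesis .
qed

text \<open>Sa is a left ideal: s(ta) = ((te)s)a by the paramedial and left invertive laws.\<close>
lemma principal_left_ideal:
  assumes ag: "AG_groupoid S m" and e: "left_identity S m e" and a: "a \<in> S"
  shows "left_ideal S m {m s a | s. s \<in> S}"
proof -
  have eS: "e \<in> S" using left_identityD(1)[OF e] .
  have "m s (m t a) \<in> {m s a | s. s \<in> S}" if st: "s \<in> S" "t \<in> S" for s t
  proof -
    have "m s (m t a) = m (m e s) (m t a)" using st by (simp add: left_identityD[OF e])
    also have "\<dots> = m (m a s) (m t e)" using AG_paramedial[OF ag e eS st a] .
    also have "\<dots> = m (m (m t e) s) a" using AG_left_invertive[OF ag a st(1) AG_closed[OF ag st(2) eS]] .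
    finally show ?thesis using ag st eS by (blast intro: AG_closed)
  qed
  then show ?thesis using ag a unfolding left_ideal_def setmult_def by (blast intro: AG_closed)
qed

text \<open>The left identity gives a = ea \<in> Sa.\<close>
lemma mem_principal_left_ideal:
  assumes "left_identity S m e" "a \<in> S"
  shows "a \<in> {m s a | s. s \<in> S}"
  using assms by (force simp: left_identity_def)

text \<open>(Sa)(Sb) = S((Sa)b), so it lies in every left ideal containing (Sa)b.\<close>
lemma principal_product_subset:
  assumes ag: "AG_groupoid S m" and e: "left_identity S m e" and P: "left_ideal S m P"
    and a: "a \<in> S" and b: "b \<in> S" and sub: "{m (m s a) b | s. s \<in> S} \<subseteq> P"
  shows "setmult m {m s a | s. s \<in> S} {m s b | s. s \<in> S} \<subseteq> P"
proof
  fix x assume "x \<in> setmult m {m s a | s. s \<in> S} {m s b | s. s \<in> S}"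
  then obtain s t where st: "s \<in> S" "t \<in> S" and x: "x = m (m s a) (m t b)"
    unfolding setmult_def by blast
  have "x = m t (m (m s a) b)"
    using x AG_left_swap[OF ag e] AG_closed[OF ag st(1) a] st b by simp
  moreover have "m (m s a) b \<in> P" using sub st by blast
  ultimately show "x \<in> P" using left_ideal_absorb[OF P st(2)] by simp
qed

lemma quasi_prime_imp_elementwise:
  assumes ag: "AG_groupoid S m" and e: "left_identity S m e"
    and qp: "quasi_prime S m P"
    and a: "a \<in> S" and b: "b \<in> S" and sub: "{m (m s a) b | s. s \<in> S} \<subseteq> P"
  shows "a \<in> P \<or> b \<in> P"
proof -
  have P: "left_ideal S m P" using qp unfolding quasi_prime_def by blast
  have "{m s a | s. s \<in> S} \<subseteq> P \<or> {m s b | s. s \<in> S} \<subseteq> P"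
    using qp principal_left_ideal[OF ag e a] principal_left_ideal[OF ag e b]
      principal_product_subset[OF ag e P a b sub]
    unfolding quasi_prime_def by blast
  then show ?thesis using mem_principal_left_ideal[OF e a] mem_principal_left_ideal[OF e b] by blast
qed

lemma elementwise_imp_quasi_prime:
  assumes P: "left_ideal S m P"
    and elem: "\<forall>a\<in>S. \<forall>b\<in>S. {m (m s a) b | s. s \<in> S} \<subseteq> P \<longrightarrow> a \<in> P \<or> b \<in> P"
  shows "quasi_prime S m P"
  unfolding quasi_prime_def
proof (intro conjI allI impI P)
  fix A B assume A: "left_ideal S m A" and B: "left_ideal S m B" and AB: "setmult m A B \<subseteq> P"
  show "A \<subseteq> P \<or> B \<subseteq> P"
  proof (rule disjCI)
    assume "\<not> B \<subseteq> P"
    then obtain b where b: "b \<in> B" "b \<notin> P" by blast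
    show "A \<subseteq> P"
    proof
      fix a assume a: "a \<in> A"
      have "{m (m s a) b | s. s \<in> S} \<subseteq> setmult m A B"
        using left_ideal_absorb[OF A _ a] b(1) unfolding setmult_def by blast
      moreover have "a \<in> S" "b \<in> S"
        using a b(1) left_ideal_subset[OF A] left_ideal_subset[OF B] by auto
      ultimately show "a \<in> P" using elem AB b(2) by blast
    qed
  qed
qed

theorem theorem4:
  fixes S :: "'a set" and m :: "'a \<Rightarrow> 'a \<Rightarrow> 'a" and e :: 'a and P :: "'a set"
  assumes "AG_groupoid S m"
    and "left_identity S m e"
    and "left_ideal S m P"
  shows "quasi_prime S m P \<longleftrightarrow>
    (\<forall>a\<in>S. \<forall>b\<in>S. {m (m s a) b | s. s \<in> S} \<subseteq> P \<longrightarrow> a \<in> P \<or> b \<in> P)"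
  using quasi_prime_imp_elementwise[OF assms(1,2)] elementwise_imp_quasi_prime[OF assms(3)]
  by blast

end
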